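(* For any natural number $n \geq 1$, $\{\omega \cdot n, \omega^\star \cdot n\} \leq_c \{\omega^2 \cdot n, (\omega^2)^\star \cdot n\}$.
   Context: Structures have domains contained in $\omega$. For countable structures $\mathcal{A},\mathcal{B}$, the class $\{\mathcal{A},\mathcal{B}\}$ denotes the class of all structures (with domain $\subseteq\omega$) isomorphic to $\mathcal{A}$ or to $\mathcal{B}$. Linear orders are in the language $\{<\}$; $L^\star$ is the reverse of a linear order $L$; $\omega\cdot n$, $\omega^2\cdot n$ are ordinal order types. An enumeration operator $\Gamma$ is a c.e. set of pairs $(\alpha,\varphi)$ with $\alpha$ a finite set of basic (atomic or negated atomic) sentences of the input language with constants from $\omega$ and $\varphi$ a basic sentence of the output language with constants from $\omega$; $\Gamma(X)=\{\varphi : (\alpha,\varphi)\in\Gamma,\ \alpha\subseteq X\}$. $\Gamma$ is a computable embedding of $\mathcal{K}_0$ into $\mathcal{K}_1$ ($\mathcal{K}_0\leq_c\mathcal{K}_1$) if for every $\mathcal{A}\in\mathcal{K}_0$, $\Gamma$ applied to the atomic diagram of $\mathcal{A}$ is the atomic diagram of a structure $\Gamma(\mathcal{A})\in\mathcal{K}_1$, and for all $\mathcal{A},\mathcal{B}\in\mathcal{K}_0$, $\mathcal{A}\cong\mathcal{B}$ iff $\Gamma(\mathcal{A})\cong\Gamma(\mathcal{B})$. *)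

theory Defs
  imports Main "HOL-Library.Nat_Bijection"
begin

definition SC :: "nat list \<Rightarrow> nat" where
  "SC l = (case l of [] \<Rightarrow> Suc 0 | x # _ \<Rightarrow> Suc x)"

definition PROJ :: "nat \<Rightarrow> nat list \<Rightarrow> nat" where
  "PROJ i l = (case drop i l of [] \<Rightarrow> 0 | x # _ \<Rightarrow> x)"

definition COMP :: "(nat list \<Rightarrow> nat) \<Rightarrow> (nat list \<Rightarrow> nat) list \<Rightarrow> nat list \<Rightarrow> nat" where
  "COMP g fs l = g (map (\<lambda>f. f l) fs)"

fun PREC :: "(nat list \<Rightarrow> nat) \<Rightarrow> (nat list \<Rightarrow> nat) \<Rightarrow> nat list \<Rightarrow> nat" where
  "PREC f g [] = f []"
| "PREC f g (x # l) = rec_nat (f l) (\<lambda>y r. g (r # y # l)) x"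

inductive PRIMREC :: "(nat list \<Rightarrow> nat) \<Rightarrow> bool" where
  zero: "PRIMREC (\<lambda>_. 0)"
| suc: "PRIMREC SC"
| proj: "PRIMREC (PROJ i)"
| comp: "PRIMREC g \<Longrightarrow> (\<forall>f \<in> set fs. PRIMREC f) \<Longrightarrow> PRIMREC (COMP g fs)"
| prec: "PRIMREC f \<Longrightarrow> PRIMREC g \<Longrightarrow> PRIMREC (PREC f g)"

text \<open>A set of naturals is c.e. iff it is the projection of a primitive recursive relation
  (Kleene normal form).\<close>
definition ce_set :: "nat set \<Rightarrow> bool" where
  "ce_set A \<longleftrightarrow> (\<exists>f. PRIMREC f \<and> A = {x. \<exists>y. f [x, y] = 0})"

datatype bsent = Lt nat nat | Eq nat nat | NLt nat nat | NEq nat nat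

fun bsent_code :: "bsent \<Rightarrow> nat" where
  "bsent_code (Lt a b) = prod_encode (0, prod_encode (a, b))"
| "bsent_code (Eq a b) = prod_encode (1, prod_encode (a, b))"
| "bsent_code (NLt a b) = prod_encode (2, prod_encode (a, b))"
| "bsent_code (NEq a b) = prod_encode (3, prod_encode (a, b))"

text \<open>A pair (alpha, phi) of an enumeration operator; the finite set alpha is given by a list
  enumerating it.\<close>
definition pair_code :: "bsent list \<times> bsent \<Rightarrow> nat" where
  "pair_code p = prod_encode (list_encode (map bsent_code (fst p)), bsent_code (snd p))"

definition enum_op :: "(bsent list \<times> bsent) set \<Rightarrow> bool" where
  "enum_op \<Gamma> \<longleftrightarrow> ce_set (pair_code ` \<Gamma>)"

definition apply_op :: "(bsent list \<times> bsent) set \<Rightarrow> bsent set \<Rightarrow> bsent set" where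
  "apply_op \<Gamma> X = {\<phi>. \<exists>\<alpha>. (\<alpha>, \<phi>) \<in> \<Gamma> \<and> set \<alpha> \<subseteq> X}"

type_synonym struc = "nat set \<times> nat rel"

definition is_struc :: "struc \<Rightarrow> bool" where
  "is_struc S \<longleftrightarrow> fst S \<noteq> {} \<and> snd S \<subseteq> fst S \<times> fst S"

definition diag :: "struc \<Rightarrow> bsent set" where
  "diag S = {Lt a b | a b. a \<in> fst S \<and> b \<in> fst S \<and> (a, b) \<in> snd S}
          \<union> {NLt a b | a b. a \<in> fst S \<and> b \<in> fst S \<and> (a, b) \<notin> snd S}
          \<union> {Eq a a | a. a \<in> fst S}
          \<union> {NEq a b | a b. a \<in> fst S \<and> b \<in> fst S \<and> a \<noteq> b}"

definition iso :: "struc \<Rightarrow> struc \<Rightarrow> bool" where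
  "iso S T \<longleftrightarrow> (\<exists>f. bij_betw f (fst S) (fst T) \<and>
      (\<forall>a \<in> fst S. \<forall>b \<in> fst S. (a, b) \<in> snd S \<longleftrightarrow> (f a, f b) \<in> snd T))"

definition cls2 :: "struc \<Rightarrow> struc \<Rightarrow> struc set" where
  "cls2 A B = {S. is_struc S \<and> (iso S A \<or> iso S B)}"

definition comp_embedding :: "(bsent list \<times> bsent) set \<Rightarrow> struc set \<Rightarrow> struc set \<Rightarrow> bool" where
  "comp_embedding \<Gamma> K0 K1 \<longleftrightarrow> enum_op \<Gamma> \<and>
     (\<forall>A \<in> K0. \<exists>B \<in> K1. apply_op \<Gamma> (diag A) = diag B) \<and>
     (\<forall>A1 \<in> K0. \<forall>A2 \<in> K0. \<forall>B1 B2. is_struc B1 \<longrightarrow> is_struc B2 \<longrightarrow>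
        apply_op \<Gamma> (diag A1) = diag B1 \<longrightarrow> apply_op \<Gamma> (diag A2) = diag B2 \<longrightarrow>
        (iso A1 A2 \<longleftrightarrow> iso B1 B2))"

definition comp_reducible :: "struc set \<Rightarrow> struc set \<Rightarrow> bool" where
  "comp_reducible K0 K1 \<longleftrightarrow> (\<exists>\<Gamma>. comp_embedding \<Gamma> K0 K1)"

definition omega :: struc where
  "omega = (UNIV, {(a, b). a < b})"

definition omega2 :: struc where
  "omega2 = (UNIV, {(prod_encode (a, b), prod_encode (c, d)) | a b c d. a < c \<or> (a = c \<and> b < d)})"

definition rev_order :: "struc \<Rightarrow> struc" where
  "rev_order L = (fst L, (snd L)\<inverse>)"

definition times_n :: "struc \<Rightarrow> nat \<Rightarrow> struc" where
  "times_n L n = ({prod_encode (i, x) | i x. i < n \<and> x \<in> fst L},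
     {(prod_encode (i, x), prod_encode (j, y)) | i j x y. i < n \<and> j < n \<and> x \<in> fst L \<and> y \<in> fst L
        \<and> (i < j \<or> (i = j \<and> (x, y) \<in> snd L))})"

end

theory Submission
  imports Defs
begin

text \<open>The embedding sends a linear order L to its lexicographic square L \<times> L, which is the
  ordinal product L \<cdot> L.  It is uniformly computable: every basic sentence about pair codes
  <a, b>, <c, d> follows from at most four basic sentences about a, b, c, d.  Ordinal arithmetic
  gives (\<omega> \<cdot> n) \<cdot> (\<omega> \<cdot> n) = \<omega>^2 \<cdot> n, and since squaring commutes with reversal,
  (\<omega>* \<cdot> n)^2 = ((\<omega> \<cdot> n)*)^2 = ((\<omega> \<cdot> n)^2)* = (\<omega>^2)* \<cdot> n.  The two images are
  distinguished by having a least element, so squaring also reflects isomorphism on the class.\<close>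

section \<open>Primitive recursive functions of fixed arity\<close>

definition prim_rec :: "nat \<Rightarrow> (nat list \<Rightarrow> nat) \<Rightarrow> bool" where
  "prim_rec n F \<longleftrightarrow> (\<exists>f. PRIMREC f \<and> (\<forall>l. length l = n \<longrightarrow> f l = F l))"

lemma prim_rec_cong:
  "prim_rec n F \<Longrightarrow> (\<And>l. length l = n \<Longrightarrow> F l = G l) \<Longrightarrow> prim_rec n G"
  unfolding prim_rec_def by metis

lemma prim_rec_nth: "i < n \<Longrightarrow> prim_rec n (\<lambda>l. l ! i)"
  unfolding prim_rec_def
  by (metis PRIMREC.proj PROJ_def Cons_nth_drop_Suc list.simps(5))

lemma prim_rec_comp:
  assumes g: "prim_rec (length fs) g" and fs: "\<forall>f \<in> set fs. prim_rec n f"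
  shows "prim_rec n (\<lambda>l. g (map (\<lambda>f. f l) fs))"
proof -
  obtain g' where g': "PRIMREC g'" "\<And>l. length l = length fs \<Longrightarrow> g' l = g l"
    using g unfolding prim_rec_def by blast
  define pick where "pick f = (SOME f'. PRIMREC f' \<and> (\<forall>l. length l = n \<longrightarrow> f' l = f l))" for f
  have chosen: "PRIMREC (pick f)" "\<And>l. length l = n \<Longrightarrow> pick f l = f l" if "f \<in> set fs" for f
    using someI_ex[of "\<lambda>f'. PRIMREC f' \<and> (\<forall>l. length l = n \<longrightarrow> f' l = f l)"] fs that
    unfolding pick_def prim_rec_def by blast+
  have "PRIMREC (COMP g' (map pick fs))"
    using g'(1) chosen(1) by (intro PRIMREC.comp) auto
  moreover have "COMP g' (map pick fs) l = g (map (\<lambda>f. f l) fs)" if "length l = n" for l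
    using chosen(2)[OF _ that] by (simp add: COMP_def g'(2) cong: map_cong)
  ultimately show ?thesis
    unfolding prim_rec_def by blast
qed

definition prim_rec1 :: "(nat \<Rightarrow> nat) \<Rightarrow> bool" where
  "prim_rec1 h \<longleftrightarrow> prim_rec 1 (\<lambda>l. h (l ! 0))"

definition prim_rec2 :: "(nat \<Rightarrow> nat \<Rightarrow> nat) \<Rightarrow> bool" where
  "prim_rec2 h \<longleftrightarrow> prim_rec 2 (\<lambda>l. h (l ! 0) (l ! 1))"

lemma prim_rec1_comp: "prim_rec1 h \<Longrightarrow> prim_rec n f \<Longrightarrow> prim_rec n (\<lambda>l. h (f l))"
  using prim_rec_comp[of "[f]" "\<lambda>l. h (l ! 0)" n] by (simp add: prim_rec1_def)

lemma prim_rec2_comp: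
  "prim_rec2 h \<Longrightarrow> prim_rec n f \<Longrightarrow> prim_rec n g \<Longrightarrow> prim_rec n (\<lambda>l. h (f l) (g l))"
  using prim_rec_comp[of "[f, g]" "\<lambda>l. h (l ! 0) (l ! 1)" n]
  by (simp add: prim_rec2_def numeral_2_eq_2)

lemma prim_rec_Suc: "prim_rec n f \<Longrightarrow> prim_rec n (\<lambda>l. Suc (f l))"
proof -
  have "prim_rec1 Suc"
    unfolding prim_rec1_def prim_rec_def
    by (intro exI[of _ SC]) (auto simp: PRIMREC.suc SC_def length_Suc_conv)
  then show "prim_rec n f \<Longrightarrow> prim_rec n (\<lambda>l. Suc (f l))"
    by (rule prim_rec1_comp)
qed

lemma prim_rec_const: "prim_rec n (\<lambda>_. c)"
proof (induction c)
  case 0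
  show ?case
    unfolding prim_rec_def using PRIMREC.zero by blast
next
  case (Suc c)
  then show ?case by (rule prim_rec_Suc)
qed

lemma prim_rec_rec:
  assumes "prim_rec n Z" "prim_rec (Suc (Suc n)) G"
  shows "prim_rec (Suc n) (\<lambda>l. rec_nat (Z (tl l)) (\<lambda>y r. G (r # y # tl l)) (hd l))"
proof -
  obtain f g where f: "PRIMREC f" "\<forall>l. length l = n \<longrightarrow> f l = Z l"
    and g: "PRIMREC g" "\<forall>l. length l = Suc (Suc n) \<longrightarrow> g l = G l"
    using assms unfolding prim_rec_def by blast
  have "PREC f g (x # l) = rec_nat (Z l) (\<lambda>y r. G (r # y # l)) x" if "length l = n" for x l
    using that by (induction x) (simp_all add: f(2) g(2))
  then have "\<forall>l. length l = Suc n \<longrightarrow>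
      PREC f g l = rec_nat (Z (tl l)) (\<lambda>y r. G (r # y # tl l)) (hd l)"
    by (auto simp: length_Suc_conv)
  then show ?thesis
    unfolding prim_rec_def using PRIMREC.prec[OF f(1) g(1)] by blast
qed

lemma prim_rec1_rec:
  assumes "prim_rec 2 (\<lambda>l. G (l ! 0) (l ! 1))" "\<And>x. h (Suc x) = G (h x) x"
  shows "prim_rec1 h"
  unfolding prim_rec1_def One_nat_def
proof (rule prim_rec_cong[OF prim_rec_rec[OF prim_rec_const[of 0 "h 0"]]])
  show "prim_rec (Suc (Suc 0)) (\<lambda>l. G (l ! 0) (l ! 1))"
    using assms(1) by (simp add: numeral_2_eq_2)
  fix l :: "nat list"
  assume "length l = Suc 0"
  then obtain x where "l = [x]"
    by (auto simp: length_Suc_conv)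
  moreover have "rec_nat (h 0) (\<lambda>y r. G r y) x = h x"
    by (induction x) (simp_all add: assms(2))
  ultimately show "rec_nat (h 0) (\<lambda>y r. G ((r # y # tl l) ! 0) ((r # y # tl l) ! 1)) (hd l) = h (l ! 0)"
    by simp
qed

lemma prim_rec2_rec:
  assumes "prim_rec1 Z" "prim_rec 3 (\<lambda>l. G (l ! 0) (l ! 1) (l ! 2))"
    "\<And>y. h 0 y = Z y" "\<And>x y. h (Suc x) y = G (h x y) x y"
  shows "prim_rec2 h"
  unfolding prim_rec2_def numeral_2_eq_2
proof (rule prim_rec_cong[OF prim_rec_rec])
  show "prim_rec (Suc 0) (\<lambda>l. Z (l ! 0))"
    using assms(1) by (simp add: prim_rec1_def)
  show "prim_rec (Suc (Suc (Suc 0))) (\<lambda>l. G (l ! 0) (l ! 1) (l ! 2))"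
    using assms(2) by (simp add: numeral_3_eq_3)
  fix l :: "nat list"
  assume "length l = Suc (Suc 0)"
  then obtain x y where "l = [x, y]"
    by (auto simp: length_Suc_conv)
  moreover have "rec_nat (Z y) (\<lambda>z r. G r z y) x = h x y"
    by (induction x) (simp_all add: assms(3,4))
  ultimately show "rec_nat (Z (tl l ! 0)) (\<lambda>y r. G ((r # y # tl l) ! 0) ((r # y # tl l) ! 1)
      ((r # y # tl l) ! 2)) (hd l) = h (l ! 0) (l ! 1)"
    by simp
qed

lemma prim_rec1_id: "prim_rec1 (\<lambda>x. x)"
  unfolding prim_rec1_def by (simp add: prim_rec_nth)

lemma prim_rec_add: "prim_rec n f \<Longrightarrow> prim_rec n g \<Longrightarrow> prim_rec n (\<lambda>l. f l + g l)"
proof -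
  have "prim_rec2 (+)"
    by (rule prim_rec2_rec[where Z = "\<lambda>y. y" and G = "\<lambda>r x y. Suc r"])
      (simp_all add: prim_rec1_id prim_rec_Suc prim_rec_nth)
  then show "prim_rec n f \<Longrightarrow> prim_rec n g \<Longrightarrow> prim_rec n (\<lambda>l. f l + g l)"
    by (rule prim_rec2_comp)
qed

lemma prim_rec_mult: "prim_rec n f \<Longrightarrow> prim_rec n g \<Longrightarrow> prim_rec n (\<lambda>l. f l * g l)"
proof -
  have "prim_rec2 (*)"
    by (rule prim_rec2_rec[where Z = "\<lambda>y. 0" and G = "\<lambda>r x y. y + r"])
      (simp_all add: prim_rec1_def prim_rec_const prim_rec_add prim_rec_nth)
  then show "prim_rec n f \<Longrightarrow> prim_rec n g \<Longrightarrow> prim_rec n (\<lambda>l. f l * g l)"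
    by (rule prim_rec2_comp)
qed

lemma prim_rec_diff: "prim_rec n f \<Longrightarrow> prim_rec n g \<Longrightarrow> prim_rec n (\<lambda>l. f l - g l)"
proof -
  have pred: "prim_rec1 (\<lambda>x. x - 1)"
    by (rule prim_rec1_rec[where G = "\<lambda>r x. x"]) (simp_all add: prim_rec_nth)
  have "prim_rec2 (\<lambda>y x. x - y)"
    by (rule prim_rec2_rec[where Z = "\<lambda>y. y" and G = "\<lambda>r x y. r - 1"], rule prim_rec1_id,
        rule prim_rec1_comp[OF pred prim_rec_nth]) simp_all
  then show "prim_rec n f \<Longrightarrow> prim_rec n g \<Longrightarrow> prim_rec n (\<lambda>l. f l - g l)"
    using prim_rec2_comp[of "\<lambda>y x. x - y" n g f] by blast
qed

text \<open>\<open>1 - (a - b)\<close> is the indicator of \<open>a \<le> b\<close>.\<close>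

lemma prim_rec_if_le:
  assumes "prim_rec n a" "prim_rec n b" "prim_rec n f" "prim_rec n g"
  shows "prim_rec n (\<lambda>l. if a l \<le> b l then f l else g l)"
proof -
  have "prim_rec n (\<lambda>l. f l * (1 - (a l - b l)) + g l * (1 - (1 - (a l - b l))))"
    using assms by (intro prim_rec_add prim_rec_mult prim_rec_diff prim_rec_const)
  then show ?thesis
    by (rule prim_rec_cong) auto
qed

lemma prim_rec1_triangle: "prim_rec1 triangle"
  by (rule prim_rec1_rec[where G = "\<lambda>r x. r + Suc x"])
    (simp_all add: prim_rec_add prim_rec_Suc prim_rec_nth)

lemma prim_rec_prod_encode:
  assumes "prim_rec n f" "prim_rec n g"
  shows "prim_rec n (\<lambda>l. prod_encode (f l, g l))"
proof -
  have "prim_rec n (\<lambda>l. triangle (f l + g l) + f l)"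
    using assms by (intro prim_rec_add prim_rec1_comp[OF prim_rec1_triangle])
  then show ?thesis
    by (simp add: prod_encode_def)
qed

fun triangle_root :: "nat \<Rightarrow> nat" where
  "triangle_root 0 = 0"
| "triangle_root (Suc y) =
    (if triangle (Suc (triangle_root y)) \<le> Suc y then Suc (triangle_root y) else triangle_root y)"

lemma triangle_root_bounds: "triangle (triangle_root y) \<le> y \<and> y < triangle (Suc (triangle_root y))"
  by (induction y) auto

lemma triangle_root_unique:
  assumes "triangle s \<le> y" "y < triangle (Suc s)"
  shows "triangle_root y = s"
proof -
  have mono: "triangle s \<le> triangle t" if "s \<le> t" for s t
    using that by (induction t) (auto simp: le_Suc_eq)
  have "triangle (triangle_root y) \<le> y" "y < triangle (Suc (triangle_root y))"
    using triangle_root_bounds by auto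
  then have "\<not> triangle_root y < s" "\<not> s < triangle_root y"
    using assms mono[of "Suc (triangle_root y)" s] mono[of "Suc s" "triangle_root y"] by auto
  then show ?thesis
    by simp
qed

lemma prod_decode_triangle_root:
  "prod_decode y = (y - triangle (triangle_root y), triangle_root y - (y - triangle (triangle_root y)))"
proof -
  obtain a b where ab: "prod_decode y = (a, b)"
    by (cases "prod_decode y")
  then have y: "y = triangle (a + b) + a"
    using prod_decode_inverse[of y] by (simp add: prod_encode_def)
  then have "triangle_root y = a + b"
    by (intro triangle_root_unique) simp_all
  then show ?thesis
    using ab y by simp
qed

lemma prim_rec_prod_decode:
  assumes "prim_rec n f"
  shows "prim_rec n (\<lambda>l. fst (prod_decode (f l)))" "prim_rec n (\<lambda>l. snd (prod_decode (f l)))"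
proof -
  have root: "prim_rec1 triangle_root"
    by (rule prim_rec1_rec[where G = "\<lambda>r y. if triangle (Suc r) \<le> Suc y then Suc r else r"],
        intro prim_rec_if_le prim_rec1_comp[OF prim_rec1_triangle] prim_rec_Suc prim_rec_nth) simp_all
  have "prim_rec n (\<lambda>l. f l - triangle (triangle_root (f l)))"
    "prim_rec n (\<lambda>l. triangle_root (f l) - (f l - triangle (triangle_root (f l))))"
    by (intro prim_rec_diff prim_rec1_comp[OF prim_rec1_triangle] prim_rec1_comp[OF root] assms)+
  then show "prim_rec n (\<lambda>l. fst (prod_decode (f l)))" "prim_rec n (\<lambda>l. snd (prod_decode (f l)))"
    by (simp_all add: prod_decode_triangle_root)
qed

section \<open>Computably enumerable sets\<close>

text \<open>The product of the two witnessing functions vanishes iff one of them does.\<close>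

lemma ce_set_Un:
  assumes "ce_set A" "ce_set B"
  shows "ce_set (A \<union> B)"
proof -
  obtain f g where f: "PRIMREC f" "A = {x. \<exists>y. f [x, y] = 0}"
    and g: "PRIMREC g" "B = {x. \<exists>y. g [x, y] = 0}"
    using assms unfolding ce_set_def by blast
  have "prim_rec 2 (\<lambda>l. f l * g l)"
    using f(1) g(1) by (intro prim_rec_mult) (auto simp: prim_rec_def)
  then obtain h where h: "PRIMREC h" "\<forall>l. length l = 2 \<longrightarrow> h l = f l * g l"
    unfolding prim_rec_def by blast
  have "h [x, y] = 0 \<longleftrightarrow> f [x, y] = 0 \<or> g [x, y] = 0" for x y
    using h(2)[rule_format, of "[x, y]"] by simp
  then have "A \<union> B = {x. \<exists>y. h [x, y] = 0}"
    unfolding f(2) g(2) by auto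
  then show ?thesis
    unfolding ce_set_def using h(1) by blast
qed

lemma ce_set_range:
  assumes "prim_rec1 h"
  shows "ce_set (range h)"
proof -
  have "prim_rec 2 (\<lambda>l. (l ! 0 - h (l ! 1)) + (h (l ! 1) - l ! 0))"
    by (intro prim_rec_add prim_rec_diff prim_rec1_comp[OF assms] prim_rec_nth) simp_all
  then obtain f where f: "PRIMREC f" "\<forall>l. length l = 2 \<longrightarrow> f l = (l ! 0 - h (l ! 1)) + (h (l ! 1) - l ! 0)"
    unfolding prim_rec_def by blast
  have "f [x, y] = 0 \<longleftrightarrow> x = h y" for x y
    using f(2)[rule_format, of "[x, y]"] by auto
  then have "range h = {x. \<exists>y. f [x, y] = 0}"
    by auto
  then show ?thesis
    unfolding ce_set_def using f(1) by blast
qed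

lemma ce_set_range4:
  assumes "prim_rec 4 (\<lambda>l. h (l ! 0) (l ! 1) (l ! 2) (l ! 3))"
  shows "ce_set (range (\<lambda>(a, b, c, d). h a b c d))"
proof -
  define decode4 where "decode4 y = [fst (prod_decode (fst (prod_decode y))),
    snd (prod_decode (fst (prod_decode y))), fst (prod_decode (snd (prod_decode y))),
    snd (prod_decode (snd (prod_decode y)))]" for y
  let ?H = "\<lambda>l. h (l ! 0) (l ! 1) (l ! 2) (l ! 3)"
  have "prim_rec 1 (\<lambda>l. ?H (map (\<lambda>f. f l) (map (\<lambda>i l. decode4 (l ! 0) ! i) [0, 1, 2, 3])))"
    using assms by (intro prim_rec_comp) (simp_all add: decode4_def prim_rec_prod_decode prim_rec_nth eval_nat_numeral)
  then have "prim_rec1 (\<lambda>y. ?H (decode4 y))"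
    unfolding prim_rec1_def by (simp add: decode4_def)
  then have "ce_set (range (\<lambda>y. ?H (decode4 y)))"
    by (rule ce_set_range)
  moreover have "range (\<lambda>y. ?H (decode4 y)) = range (\<lambda>(a, b, c, d). h a b c d)"
  proof (intro equalityI subsetI)
    fix x
    assume "x \<in> range (\<lambda>(a, b, c, d). h a b c d)"
    then obtain a b c d where "x = h a b c d"
      by auto
    then have "x = ?H (decode4 (prod_encode (prod_encode (a, b), prod_encode (c, d))))"
      by (simp add: decode4_def)
    then show "x \<in> range (\<lambda>y. ?H (decode4 y))"
      by blast
  next
    fix x
    assume "x \<in> range (\<lambda>y. ?H (decode4 y))"
    then obtain y where "x = ?H (decode4 y)"
      by blast
    then show "x \<in> range (\<lambda>(a, b, c, d). h a b c d)"
      unfolding decode4_def by (auto intro: image_eqI[where x = "(_, _, _, _)"])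
  qed
  ultimately show ?thesis
    by simp
qed

section \<open>Diagrams and isomorphisms\<close>

lemma in_diag_iff:
  "Eq a b \<in> diag S \<longleftrightarrow> a = b \<and> a \<in> fst S"
  "Lt a b \<in> diag S \<longleftrightarrow> a \<in> fst S \<and> b \<in> fst S \<and> (a, b) \<in> snd S"
  "NLt a b \<in> diag S \<longleftrightarrow> a \<in> fst S \<and> b \<in> fst S \<and> (a, b) \<notin> snd S"
  "NEq a b \<in> diag S \<longleftrightarrow> a \<in> fst S \<and> b \<in> fst S \<and> a \<noteq> b"
  unfolding diag_def by auto

lemma diag_inject:
  assumes "is_struc S" "is_struc T" "diag S = diag T"
  shows "S = T"
proof -
  have "fst S = fst T"
    using assms(3) in_diag_iff(1) by blast
  moreover have "snd S = snd T"
    using assms in_diag_iff(2) unfolding is_struc_def by blast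
  ultimately show ?thesis
    by (simp add: prod_eq_iff)
qed

lemma iso_sym: "iso S T \<Longrightarrow> iso T S"
proof -
  assume "iso S T"
  then obtain f where f: "bij_betw f (fst S) (fst T)"
    "\<forall>a \<in> fst S. \<forall>b \<in> fst S. (a, b) \<in> snd S \<longleftrightarrow> (f a, f b) \<in> snd T"
    unfolding iso_def by blast
  let ?g = "inv_into (fst S) f"
  have "bij_betw ?g (fst T) (fst S)"
    using f(1) by (rule bij_betw_inv_into)
  moreover have "(a, b) \<in> snd T \<longleftrightarrow> (?g a, ?g b) \<in> snd S" if "a \<in> fst T" "b \<in> fst T" for a b
  proof -
    have "?g a \<in> fst S" "?g b \<in> fst S" "f (?g a) = a" "f (?g b) = b"
      using that f(1) by (auto simp: bij_betw_inv_into_right bij_betwE[OF bij_betw_inv_into])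
    then show ?thesis
      using f(2) by metis
  qed
  ultimately show ?thesis
    unfolding iso_def by blast
qed

lemma iso_trans [trans]: "iso S T \<Longrightarrow> iso T U \<Longrightarrow> iso S U"
proof -
  assume "iso S T" "iso T U"
  then obtain f g where f: "bij_betw f (fst S) (fst T)"
    "\<forall>a \<in> fst S. \<forall>b \<in> fst S. (a, b) \<in> snd S \<longleftrightarrow> (f a, f b) \<in> snd T"
    and g: "bij_betw g (fst T) (fst U)"
    "\<forall>a \<in> fst T. \<forall>b \<in> fst T. (a, b) \<in> snd T \<longleftrightarrow> (g a, g b) \<in> snd U"
    unfolding iso_def by blast
  have "bij_betw (g \<circ> f) (fst S) (fst U)"
    using f(1) g(1) by (rule bij_betw_trans)
  moreover have "(a, b) \<in> snd S \<longleftrightarrow> ((g \<circ> f) a, (g \<circ> f) b) \<in> snd U" if "a \<in> fst S" "b \<in> fst S" for a b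
  proof -
    have "f a \<in> fst T" "f b \<in> fst T"
      using that f(1) by (auto dest: bij_betwE)
    then show ?thesis
      using that f(2) g(2) by simp
  qed
  ultimately show ?thesis
    unfolding iso_def by blast
qed

lemma iso_via_parametrizations:
  assumes "inj_on \<phi> P" "inj_on \<psi> P" "fst S = \<phi> ` P" "fst T = \<psi> ` P"
    and "\<And>p q. p \<in> P \<Longrightarrow> q \<in> P \<Longrightarrow> (\<phi> p, \<phi> q) \<in> snd S \<longleftrightarrow> (\<psi> p, \<psi> q) \<in> snd T"
  shows "iso S T"
proof -
  let ?f = "\<psi> \<circ> inv_into P \<phi>"
  have "bij_betw ?f (fst S) (fst T)"
    unfolding assms(3,4) using assms(1,2)
    by (intro bij_betw_trans[where B = P] bij_betw_inv_into) (simp_all add: inj_on_imp_bij_betw)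
  moreover have "(\<phi> p, \<phi> q) \<in> snd S \<longleftrightarrow> (?f (\<phi> p), ?f (\<phi> q)) \<in> snd T" if "p \<in> P" "q \<in> P" for p q
    using that assms(5) by (simp add: inv_into_f_f[OF assms(1)])
  then have "\<forall>a \<in> fst S. \<forall>b \<in> fst S. (a, b) \<in> snd S \<longleftrightarrow> (?f a, ?f b) \<in> snd T"
    unfolding assms(3) by blast
  ultimately show ?thesis
    unfolding iso_def by blast
qed

lemma mem_cls2_iff: "S \<in> cls2 A B \<longleftrightarrow> is_struc S \<and> (iso S A \<or> iso S B)"
  by (simp add: cls2_def)

lemma comp_embedding_cls2:
  assumes "enum_op \<Gamma>" and computes: "\<And>S. apply_op \<Gamma> (diag S) = diag (F S)"
    and struc: "\<And>S. is_struc S \<Longrightarrow> is_struc (F S)"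
    and iso_F: "\<And>S T. iso S T \<Longrightarrow> iso (F S) (F T)"
    and FA: "iso (F A) A'" and FB: "iso (F B) B'" and distinct: "\<not> iso A' B'"
  shows "comp_embedding \<Gamma> (cls2 A B) (cls2 A' B')"
proof -
  have image: "F S \<in> cls2 A' B'" if "S \<in> cls2 A B" for S
  proof -
    have "is_struc S" "iso S A \<or> iso S B"
      using that by (simp_all add: mem_cls2_iff)
    moreover have "iso (F S) A'" if "iso S A"
      using iso_F[OF that] FA by (rule iso_trans)
    moreover have "iso (F S) B'" if "iso S B"
      using iso_F[OF that] FB by (rule iso_trans)
    ultimately show ?thesis
      unfolding mem_cls2_iff using struc by blast
  qed
  have cross: False if "iso S1 A" "iso S2 B" "iso (F S1) (F S2)" for S1 S2
  proof -
    have "iso A' (F A)"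
      using FA by (rule iso_sym)
    also have "iso \<dots> (F S1)"
      using iso_F[OF iso_sym[OF that(1)]] .
    also have "iso \<dots> (F S2)"
      by (rule that(3))
    also have "iso \<dots> (F B)"
      using that(2) by (rule iso_F)
    also have "iso \<dots> B'"
      by (rule FB)
    finally show False
      using distinct by simp
  qed
  have reflect: "iso S1 S2" if "S1 \<in> cls2 A B" "S2 \<in> cls2 A B" "iso (F S1) (F S2)" for S1 S2
  proof -
    have "iso S1 A \<or> iso S1 B" "iso S2 A \<or> iso S2 B"
      using that(1,2) by (simp_all add: mem_cls2_iff)
    then show ?thesis
    proof (elim disjE)
      assume "iso S1 A" "iso S2 A"
      then show ?thesis
        by (rule iso_trans[OF _ iso_sym])
    next
      assume "iso S1 B" "iso S2 B"
      then show ?thesis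
        by (rule iso_trans[OF _ iso_sym])
    next
      assume "iso S1 A" "iso S2 B"
      then show ?thesis
        using cross that(3) by blast
    next
      assume "iso S1 B" "iso S2 A"
      then show ?thesis
        using cross[of S2 S1] iso_sym[OF that(3)] by blast
    qed
  qed
  show ?thesis
    unfolding comp_embedding_def
  proof (intro conjI ballI allI impI)
    show "\<exists>T \<in> cls2 A' B'. apply_op \<Gamma> (diag S) = diag T" if "S \<in> cls2 A B" for S
      using image[OF that] computes by blast
    fix S1 S2 T1 T2
    assume S: "S1 \<in> cls2 A B" "S2 \<in> cls2 A B" and T: "is_struc T1" "is_struc T2"
      and diags: "apply_op \<Gamma> (diag S1) = diag T1" "apply_op \<Gamma> (diag S2) = diag T2"
    have "is_struc S1" "is_struc S2"
      using S by (simp_all add: mem_cls2_iff)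
    then have "T1 = F S1" "T2 = F S2"
      using diag_inject[OF T(1) struc] diag_inject[OF T(2) struc] diags computes by simp_all
    then show "iso S1 S2 \<longleftrightarrow> iso T1 T2"
      using iso_F[of S1 S2] reflect[OF S] by blast
  qed (rule assms(1))
qed

section \<open>The lexicographic square\<close>

definition lex_square :: "struc \<Rightarrow> struc" where
  "lex_square S = (prod_encode ` (fst S \<times> fst S),
     {(prod_encode (a, b), prod_encode (c, d)) | a b c d.
        a \<in> fst S \<and> b \<in> fst S \<and> c \<in> fst S \<and> d \<in> fst S \<and>
        ((a, c) \<in> snd S \<or> (a = c \<and> (b, d) \<in> snd S))})"

lemma fst_lex_square: "fst (lex_square S) = prod_encode ` (fst S \<times> fst S)"
  unfolding lex_square_def by simp

lemma lex_square_iff: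
  "prod_encode (a, b) \<in> fst (lex_square S) \<longleftrightarrow> a \<in> fst S \<and> b \<in> fst S"
  "(prod_encode (a, b), prod_encode (c, d)) \<in> snd (lex_square S) \<longleftrightarrow>
     a \<in> fst S \<and> b \<in> fst S \<and> c \<in> fst S \<and> d \<in> fst S \<and>
     ((a, c) \<in> snd S \<or> (a = c \<and> (b, d) \<in> snd S))"
  unfolding lex_square_def by (auto simp: inj_on_image_mem_iff[OF inj_prod_encode])

lemma is_struc_lex_square: "is_struc S \<Longrightarrow> is_struc (lex_square S)"
  unfolding is_struc_def lex_square_def by auto

lemma iso_lex_square: "iso S T \<Longrightarrow> iso (lex_square S) (lex_square T)"
proof -
  assume "iso S T"
  then obtain f where f: "bij_betw f (fst S) (fst T)"
    "\<forall>a \<in> fst S. \<forall>b \<in> fst S. (a, b) \<in> snd S \<longleftrightarrow> (f a, f b) \<in> snd T"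
    unfolding iso_def by blast
  then have inj: "inj_on f (fst S)" and img: "f ` fst S = fst T"
    by (auto simp: bij_betw_def)
  have into: "f a \<in> fst T" if "a \<in> fst S" for a
    using img that by blast
  show ?thesis
  proof (rule iso_via_parametrizations[where P = "fst S \<times> fst S" and \<phi> = prod_encode
        and \<psi> = "\<lambda>(a, b). prod_encode (f a, f b)"])
    show "inj_on (\<lambda>(a, b). prod_encode (f a, f b)) (fst S \<times> fst S)"
      using inj by (auto simp: inj_on_def)
    show "fst (lex_square T) = (\<lambda>(a, b). prod_encode (f a, f b)) ` (fst S \<times> fst S)"
      unfolding fst_lex_square img[symmetric] by auto
    show "(prod_encode p, prod_encode q) \<in> snd (lex_square S) \<longleftrightarrow>
        ((\<lambda>(a, b). prod_encode (f a, f b)) p, (\<lambda>(a, b). prod_encode (f a, f b)) q) \<in> snd (lex_square T)"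
      if "p \<in> fst S \<times> fst S" "q \<in> fst S \<times> fst S" for p q
      using that f(2) into inj_onD[OF inj] by (auto simp: lex_square_iff)
  qed (simp_all add: fst_lex_square inj_prod_encode)
qed

lemma iso_rev_order: "iso S T \<Longrightarrow> iso (rev_order S) (rev_order T)"
  unfolding iso_def rev_order_def by auto

lemma lex_square_rev_order: "lex_square (rev_order S) = rev_order (lex_square S)"
  unfolding lex_square_def rev_order_def by auto

text \<open>Side conditions such as
  \<open>a \<noteq> c\<close> are expressed by premises \<open>NEq a c\<close>, so the operator is a plain union of
  recursively enumerable families. Whether \<open><a, b> < <a, d>\<close> also depends on \<open>(a, a)\<close>,
  hence the premise \<open>NLt a a\<close> of the last scheme.\<close>

definition lex_square_op :: "(bsent list \<times> bsent) set" where
  "lex_square_op =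
     range (\<lambda>(a, b, c :: nat, d :: nat). ([Eq a a, Eq b b], Eq (prod_encode (a, b)) (prod_encode (a, b))))
   \<union> range (\<lambda>(a, b, c, d). ([NEq a c, Eq b b, Eq d d], NEq (prod_encode (a, b)) (prod_encode (c, d))))
   \<union> range (\<lambda>(a, b, c :: nat, d). ([Eq a a, NEq b d], NEq (prod_encode (a, b)) (prod_encode (a, d))))
   \<union> range (\<lambda>(a, b, c, d). ([Lt a c, Eq b b, Eq d d], Lt (prod_encode (a, b)) (prod_encode (c, d))))
   \<union> range (\<lambda>(a, b, c :: nat, d). ([Eq a a, Lt b d], Lt (prod_encode (a, b)) (prod_encode (a, d))))
   \<union> range (\<lambda>(a, b, c, d). ([NLt a c, NEq a c, Eq b b, Eq d d], NLt (prod_encode (a, b)) (prod_encode (c, d))))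
   \<union> range (\<lambda>(a, b, c :: nat, d). ([NLt a a, NLt b d], NLt (prod_encode (a, b)) (prod_encode (a, d))))"

lemma enum_op_lex_square_op: "enum_op lex_square_op"
  unfolding enum_op_def lex_square_op_def image_Un image_image prod.case_distrib
  by (intro ce_set_Un ce_set_range4; simp add: pair_code_def;
      intro prim_rec_prod_encode prim_rec_Suc prim_rec_const prim_rec_nth; simp)

lemma lex_square_op_rules:
  "([Eq a a, Eq b b], Eq (prod_encode (a, b)) (prod_encode (a, b))) \<in> lex_square_op"
  "([NEq a c, Eq b b, Eq d d], NEq (prod_encode (a, b)) (prod_encode (c, d))) \<in> lex_square_op"
  "([Eq a a, NEq b d], NEq (prod_encode (a, b)) (prod_encode (a, d))) \<in> lex_square_op"
  "([Lt a c, Eq b b, Eq d d], Lt (prod_encode (a, b)) (prod_encode (c, d))) \<in> lex_square_op"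
  "([Eq a a, Lt b d], Lt (prod_encode (a, b)) (prod_encode (a, d))) \<in> lex_square_op"
  "([NLt a c, NEq a c, Eq b b, Eq d d], NLt (prod_encode (a, b)) (prod_encode (c, d))) \<in> lex_square_op"
  "([NLt a a, NLt b d], NLt (prod_encode (a, b)) (prod_encode (a, d))) \<in> lex_square_op"
  unfolding lex_square_op_def by (auto intro: image_eqI[where x = "(a, b, c, d)"])

lemma apply_lex_square_op: "apply_op lex_square_op (diag S) = diag (lex_square S)"
proof (intro equalityI subsetI)
  fix \<phi>
  assume "\<phi> \<in> apply_op lex_square_op (diag S)"
  then obtain \<alpha> where "(\<alpha>, \<phi>) \<in> lex_square_op" "set \<alpha> \<subseteq> diag S"
    unfolding apply_op_def by blast
  then show "\<phi> \<in> diag (lex_square S)"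
    unfolding lex_square_op_def by (auto simp: in_diag_iff lex_square_iff)
next
  have by_rule: "\<phi> \<in> apply_op lex_square_op (diag S)"
    if "(\<alpha>, \<phi>) \<in> lex_square_op" "set \<alpha> \<subseteq> diag S" for \<alpha> \<phi>
    using that unfolding apply_op_def by blast
  fix \<phi>
  assume "\<phi> \<in> diag (lex_square S)"
  then obtain a b c d where dom: "a \<in> fst S" "b \<in> fst S" "c \<in> fst S" "d \<in> fst S" and
    "\<phi> = Eq (prod_encode (a, b)) (prod_encode (a, b)) \<or>
     \<phi> = Lt (prod_encode (a, b)) (prod_encode (c, d)) \<and> ((a, c) \<in> snd S \<or> (a = c \<and> (b, d) \<in> snd S)) \<or>
     \<phi> = NLt (prod_encode (a, b)) (prod_encode (c, d)) \<and> (a, c) \<notin> snd S \<and> (a = c \<longrightarrow> (b, d) \<notin> snd S) \<or>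
     \<phi> = NEq (prod_encode (a, b)) (prod_encode (c, d)) \<and> (a \<noteq> c \<or> b \<noteq> d)"
    unfolding diag_def lex_square_def by auto
  then show "\<phi> \<in> apply_op lex_square_op (diag S)"
  proof (elim disjE conjE)
    assume "\<phi> = Eq (prod_encode (a, b)) (prod_encode (a, b))"
    then show ?thesis
      using dom by (simp add: by_rule[OF lex_square_op_rules(1)] in_diag_iff)
  next
    assume "\<phi> = Lt (prod_encode (a, b)) (prod_encode (c, d))" "(a, c) \<in> snd S"
    then show ?thesis
      using dom by (simp add: by_rule[OF lex_square_op_rules(4)] in_diag_iff)
  next
    assume "\<phi> = Lt (prod_encode (a, b)) (prod_encode (c, d))" "a = c" "(b, d) \<in> snd S"
    then show ?thesis
      using dom by (simp add: by_rule[OF lex_square_op_rules(5)] in_diag_iff)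
  next
    assume "\<phi> = NLt (prod_encode (a, b)) (prod_encode (c, d))" "(a, c) \<notin> snd S"
      "a = c \<longrightarrow> (b, d) \<notin> snd S"
    then show ?thesis
      using dom by (cases "a = c")
        (simp_all add: by_rule[OF lex_square_op_rules(6)] by_rule[OF lex_square_op_rules(7)] in_diag_iff)
  next
    assume "\<phi> = NEq (prod_encode (a, b)) (prod_encode (c, d))" "a \<noteq> c"
    then show ?thesis
      using dom by (simp add: by_rule[OF lex_square_op_rules(2)] in_diag_iff)
  next
    assume "\<phi> = NEq (prod_encode (a, b)) (prod_encode (c, d))" "b \<noteq> d"
    then show ?thesis
      using dom by (cases "a = c")
        (simp_all add: by_rule[OF lex_square_op_rules(2)] by_rule[OF lex_square_op_rules(3)] in_diag_iff)
  qed
qed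

section \<open>Squares of \<open>\<omega> \<cdot> n\<close> and \<open>\<omega>* \<cdot> n\<close>\<close>

lemma fst_times_n: "fst (times_n L n) = prod_encode ` ({..<n} \<times> fst L)"
  unfolding times_n_def by auto

lemma times_n_iff:
  "prod_encode (i, x) \<in> fst (times_n L n) \<longleftrightarrow> i < n \<and> x \<in> fst L"
  "(prod_encode (i, x), prod_encode (j, y)) \<in> snd (times_n L n) \<longleftrightarrow>
     i < n \<and> j < n \<and> x \<in> fst L \<and> y \<in> fst L \<and> (i < j \<or> (i = j \<and> (x, y) \<in> snd L))"
  unfolding times_n_def by auto

lemma iso_times_n_rev_order: "iso (times_n (rev_order L) n) (rev_order (times_n L n))"
proof (rule iso_via_parametrizations[where P = "{..<n} \<times> fst L" and \<phi> = prod_encode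
      and \<psi> = "\<lambda>(i, x). prod_encode (n - 1 - i, x)"])
  show "inj_on (\<lambda>(i, x). prod_encode (n - 1 - i, x)) ({..<n} \<times> fst L)"
    by (auto simp: inj_on_def)
  have "prod_encode (i, x) \<in> (\<lambda>(i, x). prod_encode (n - 1 - i, x)) ` ({..<n} \<times> fst L)"
    if "i < n" "x \<in> fst L" for i x
    using that by (intro image_eqI[where x = "(n - 1 - i, x)"]) auto
  then show "fst (rev_order (times_n L n)) = (\<lambda>(i, x). prod_encode (n - 1 - i, x)) ` ({..<n} \<times> fst L)"
    unfolding rev_order_def fst_conv fst_times_n by fastforce
  show "(prod_encode p, prod_encode q) \<in> snd (times_n (rev_order L) n) \<longleftrightarrow>
      ((\<lambda>(i, x). prod_encode (n - 1 - i, x)) p, (\<lambda>(i, x). prod_encode (n - 1 - i, x)) q)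
        \<in> snd (rev_order (times_n L n))"
    if pq: "p \<in> {..<n} \<times> fst L" "q \<in> {..<n} \<times> fst L" for p q
  proof -
    obtain i x j y where "p = (i, x)" "q = (j, y)" "i < n" "j < n" "x \<in> fst L" "y \<in> fst L"
      using pq by auto
    then show ?thesis
      by (auto simp: times_n_iff rev_order_def)
  qed
qed (simp_all add: fst_times_n rev_order_def inj_prod_encode)

lemma mult_add_less_mult_add_iff:
  fixes n :: nat
  assumes "j < n" "j' < n"
  shows "x * n + j < x' * n + j' \<longleftrightarrow> x < x' \<or> (x = x' \<and> j < j')"
proof -
  have less: "y * n + i < y' * n + i'" if "y < y'" "i < n" for y y' i i' :: nat
  proof -
    have "y * n + i < Suc y * n"
      using that(2) by simp
    also have "\<dots> \<le> y' * n"
      using that(1) by (intro mult_le_mono1) simp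
    finally show ?thesis
      by simp
  qed
  show ?thesis
    using less[of x x' j j'] less[of x' x j' j] assms by (cases x x' rule: linorder_cases) auto
qed

lemma mult_add_eq_mult_add_iff:
  fixes n :: nat
  assumes "j < n" "j' < n"
  shows "x * n + j = x' * n + j' \<longleftrightarrow> x = x' \<and> j = j'"
  using mult_add_less_mult_add_iff[OF assms, of x x'] mult_add_less_mult_add_iff[OF assms(2,1), of x' x]
  by (cases x x' rule: linorder_cases) auto

lemma omega_simps:
  "fst omega = UNIV" "(a, b) \<in> snd omega \<longleftrightarrow> a < b" "fst omega2 = UNIV"
  "(prod_encode (a, b), prod_encode (c, d)) \<in> snd omega2 \<longleftrightarrow> a < c \<or> (a = c \<and> b < d)"
  unfolding omega_def omega2_def by auto

lemma rev_order_simps: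
  "fst (rev_order L) = fst L" "(x, y) \<in> snd (rev_order L) \<longleftrightarrow> (y, x) \<in> snd L"
  unfolding rev_order_def by auto

lemma fst_lex_square_times_n:
  "fst (lex_square (times_n L n)) = (\<lambda>(i, x, j, y). prod_encode (prod_encode (i, x), prod_encode (j, y)))
     ` ({..<n} \<times> fst L \<times> {..<n} \<times> fst L)"
proof (intro equalityI subsetI)
  fix p
  assume "p \<in> fst (lex_square (times_n L n))"
  then obtain i x j y where "p = prod_encode (prod_encode (i, x), prod_encode (j, y))"
    "i < n" "x \<in> fst L" "j < n" "y \<in> fst L"
    unfolding fst_lex_square fst_times_n by auto
  then show "p \<in> (\<lambda>(i, x, j, y). prod_encode (prod_encode (i, x), prod_encode (j, y)))
      ` ({..<n} \<times> fst L \<times> {..<n} \<times> fst L)"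
    by (intro image_eqI[where x = "(i, x, j, y)"]) auto
qed (auto simp: lex_square_iff times_n_iff)

lemma fst_times_n_omega2:
  "fst (times_n omega2 n) = (\<lambda>(i, x, j, y). prod_encode (i, prod_encode (x * n + j, y)))
     ` ({..<n} \<times> UNIV \<times> {..<n} \<times> UNIV)"
proof (intro equalityI subsetI)
  fix p
  assume "p \<in> fst (times_n omega2 n)"
  then obtain i z where "p = prod_encode (i, z)" "i < n"
    unfolding fst_times_n by auto
  moreover obtain a y where "z = prod_encode (a, y)"
    by (metis prod_decode_inverse surj_pair)
  ultimately show "p \<in> (\<lambda>(i, x, j, y). prod_encode (i, prod_encode (x * n + j, y)))
      ` ({..<n} \<times> UNIV \<times> {..<n} \<times> UNIV)"
    by (intro image_eqI[where x = "(i, a div n, a mod n, y)"]) auto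
qed (auto simp: times_n_iff omega_simps)

text \<open>The \<open>\<omega>\<close>-coordinate \<open>x\<close> of the first factor and the copy index \<open>j\<close> of the second
  factor merge into the single \<open>\<omega>\<close>-coordinate \<open>x * n + j\<close>: \<open>\<omega>\<close> copies of an
  \<open>n\<close>-element chain form a copy of \<open>\<omega>\<close>.\<close>

lemma iso_lex_square_omega_times: "iso (lex_square (times_n omega n)) (times_n omega2 n)"
proof (rule iso_via_parametrizations[OF _ _ fst_lex_square_times_n[of omega n, unfolded omega_simps]
      fst_times_n_omega2])
  show "inj_on (\<lambda>(i, x, j, y). prod_encode (prod_encode (i, x), prod_encode (j, y)))
      ({..<n} \<times> UNIV \<times> {..<n} \<times> UNIV)"
    by (auto simp: inj_on_def)
  show "inj_on (\<lambda>(i, x, j, y). prod_encode (i, prod_encode (x * n + j, y)))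
      ({..<n} \<times> UNIV \<times> {..<n} \<times> UNIV)"
    by (auto simp: inj_on_def mult_add_eq_mult_add_iff)
  fix p q :: "nat \<times> nat \<times> nat \<times> nat"
  assume "p \<in> {..<n} \<times> UNIV \<times> {..<n} \<times> UNIV" "q \<in> {..<n} \<times> UNIV \<times> {..<n} \<times> UNIV"
  then obtain i x j y i' x' j' y' where "p = (i, x, j, y)" "q = (i', x', j', y')"
    and "i < n" "j < n" "i' < n" "j' < n"
    by auto
  then show "((\<lambda>(i, x, j, y). prod_encode (prod_encode (i, x), prod_encode (j, y))) p,
         (\<lambda>(i, x, j, y). prod_encode (prod_encode (i, x), prod_encode (j, y))) q)
           \<in> snd (lex_square (times_n omega n)) \<longleftrightarrow>
        ((\<lambda>(i, x, j, y). prod_encode (i, prod_encode (x * n + j, y))) p,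
         (\<lambda>(i, x, j, y). prod_encode (i, prod_encode (x * n + j, y))) q) \<in> snd (times_n omega2 n)"
    by (auto simp: lex_square_iff times_n_iff omega_simps mult_add_less_mult_add_iff mult_add_eq_mult_add_iff)
qed

lemma iso_lex_square_rev_omega_times:
  "iso (lex_square (times_n (rev_order omega) n)) (times_n (rev_order omega2) n)"
proof -
  have "iso (lex_square (times_n (rev_order omega) n)) (lex_square (rev_order (times_n omega n)))"
    by (rule iso_lex_square[OF iso_times_n_rev_order])
  also have "lex_square (rev_order (times_n omega n)) = rev_order (lex_square (times_n omega n))"
    by (rule lex_square_rev_order)
  also have "iso \<dots> (rev_order (times_n omega2 n))"
    by (rule iso_rev_order[OF iso_lex_square_omega_times])
  also have "iso \<dots> (times_n (rev_order omega2) n)"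
    by (rule iso_sym[OF iso_times_n_rev_order])
  finally show ?thesis .
qed

definition has_least :: "struc \<Rightarrow> bool" where
  "has_least S \<longleftrightarrow> (\<exists>m \<in> fst S. \<forall>x \<in> fst S. x \<noteq> m \<longrightarrow> (m, x) \<in> snd S)"

lemma has_least_iso:
  assumes "iso S T" "has_least S"
  shows "has_least T"
proof -
  obtain f where f: "bij_betw f (fst S) (fst T)"
    "\<forall>a \<in> fst S. \<forall>b \<in> fst S. (a, b) \<in> snd S \<longleftrightarrow> (f a, f b) \<in> snd T"
    using assms(1) unfolding iso_def by blast
  obtain m where m: "m \<in> fst S" "\<forall>x \<in> fst S. x \<noteq> m \<longrightarrow> (m, x) \<in> snd S"
    using assms(2) unfolding has_least_def by blast
  have "f m \<in> fst T"
    using f(1) m(1) by (auto dest: bij_betwE)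
  moreover have "(f m, y) \<in> snd T" if y: "y \<in> fst T" "y \<noteq> f m" for y
  proof -
    obtain x where "x \<in> fst S" "y = f x"
      using f(1) y(1) by (auto simp: bij_betw_def)
    then show ?thesis
      using m f(2) y(2) by auto
  qed
  ultimately show ?thesis
    unfolding has_least_def by blast
qed

lemma has_least_omega2_times: "n \<ge> 1 \<Longrightarrow> has_least (times_n omega2 n)"
  unfolding has_least_def
proof (intro bexI[of _ "prod_encode (0, prod_encode (0, 0))"] ballI impI)
  fix p
  assume "p \<in> fst (times_n omega2 n)" "p \<noteq> prod_encode (0, prod_encode (0, 0))"
  moreover obtain i a b where "p = prod_encode (i, prod_encode (a, b))"
    by (metis prod_decode_inverse surj_pair)
  ultimately show "(prod_encode (0, prod_encode (0, 0)), p) \<in> snd (times_n omega2 n)"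
    by (auto simp: times_n_iff omega_simps rev_order_simps)
qed (simp add: times_n_iff omega_simps rev_order_simps)

lemma not_has_least_rev_omega2_times: "\<not> has_least (times_n (rev_order omega2) n)"
proof
  assume "has_least (times_n (rev_order omega2) n)"
  then obtain m where "m \<in> fst (times_n (rev_order omega2) n)" and least:
      "\<forall>p \<in> fst (times_n (rev_order omega2) n). p \<noteq> m \<longrightarrow> (m, p) \<in> snd (times_n (rev_order omega2) n)"
    unfolding has_least_def by blast
  moreover obtain i a b where "m = prod_encode (i, prod_encode (a, b))"
    by (metis prod_decode_inverse surj_pair)
  ultimately show False
    using least[rule_format, of "prod_encode (i, prod_encode (Suc a, b))"]
    by (simp add: times_n_iff omega_simps rev_order_simps)
qed

theorem theorem3p1:
  fixes n :: nat
  assumes "n \<ge> 1"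
  shows "comp_reducible
           (cls2 (times_n omega n) (times_n (rev_order omega) n))
           (cls2 (times_n omega2 n) (times_n (rev_order omega2) n))"
proof -
  have "\<not> iso (times_n omega2 n) (times_n (rev_order omega2) n)"
    using has_least_iso has_least_omega2_times[OF assms] not_has_least_rev_omega2_times by blast
  with enum_op_lex_square_op apply_lex_square_op is_struc_lex_square iso_lex_square
    iso_lex_square_omega_times iso_lex_square_rev_omega_times
  have "comp_embedding lex_square_op
      (cls2 (times_n omega n) (times_n (rev_order omega) n))
      (cls2 (times_n omega2 n) (times_n (rev_order omega2) n))"
    by (rule comp_embedding_cls2)
  then show ?thesis
    unfolding comp_reducible_def by blast
qed

end
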